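(* For all integers $d\ge2$ and $k\ge1$, if $T$ is chosen uniformly at random from $\mathcal{C}_k^{(d)}$, then the probability that at least $d-1$ of the $d$ children of the root of $T$ are leaves is at least $1/e$.
   Context: A $d$-Catalan tree is a rooted planar tree in which each vertex has $0$ or $d$ children; $\mathcal{C}_k^{(d)}$ is the set of such trees with $k$ internal (non-leaf) vertices. *)

theory Defs
  imports Complex_Main
begin

datatype ptree = Node "ptree list"

fun children :: "ptree \<Rightarrow> ptree list" where
  "children (Node ts) = ts"

definition is_leaf :: "ptree \<Rightarrow> bool" where
  "is_leaf t \<longleftrightarrow> children t = []"

fun dcatalan :: "nat \<Rightarrow> ptree \<Rightarrow> bool" where
  "dcatalan d (Node ts) \<longleftrightarrow> (ts = [] \<or> length ts = d) \<and> (\<forall>t\<in>set ts. dcatalan d t)"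

fun internal :: "ptree \<Rightarrow> nat" where
  "internal (Node ts) = (if ts = [] then 0 else 1 + sum_list (map internal ts))"

definition catalan_trees :: "nat \<Rightarrow> nat \<Rightarrow> ptree set" where
  "catalan_trees d k = {t. dcatalan d t \<and> internal t = k}"

end

theory Submission
  imports Defs
begin

text \<open>Write \<open>c k\<close> for the number of \<open>d\<close>-Catalan trees with \<open>k\<close> internal vertices.
  Removing the root turns such a tree into a forest of \<open>d\<close> trees; classifying forests by
  their first tree gives a Pascal-type recurrence, solved by \<open>m / (d n + m) * (d n + m choose n)\<close>
  for forests of \<open>m\<close> trees with \<open>n\<close> internal vertices.  Hence \<open>k * c k = (d k) choose (k - 1)\<close>.

  For \<open>k \<ge> 2\<close>, placing a tree counted by \<open>c (k - 1)\<close> at any of the \<open>d\<close> positions below a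
  root whose other children are leaves gives \<open>d * c (k - 1)\<close> distinct trees with at least
  \<open>d - 1\<close> leaf children.  On the other hand \<open>(N + 1 choose r) / (N choose r) = (N + 1) / (N + 1 - r)\<close>
  is at most \<open>d / (d - 1)\<close> as long as \<open>d r \<le> N + 1\<close>, and with the binomial formula this yields
  \<open>c k \<le> d * (1 + 1 / (d - 1)) ^ (d - 1) * c (k - 1) \<le> e * d * c (k - 1)\<close>.  For \<open>k = 1\<close> all
  children of the root are leaves.\<close>

lemma internal_eq_0_iff: "internal t = 0 \<longleftrightarrow> t = Node []"
  by (cases t) auto

definition dforests :: "nat \<Rightarrow> nat \<Rightarrow> nat \<Rightarrow> ptree list set" where
  "dforests d m n =
     {ts. length ts = m \<and> (\<forall>t\<in>set ts. dcatalan d t) \<and> sum_list (map internal ts) = n}"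

lemma dforests_0: "dforests d 0 n = (if n = 0 then {[]} else {})"
  by (auto simp: dforests_def)

lemma dforests_Suc_0: "dforests d (Suc m) 0 = Cons (Node []) ` dforests d m 0"
proof -
  have "ts \<in> Cons (Node []) ` dforests d m 0" if "ts \<in> dforests d (Suc m) 0" for ts
    using that by (cases ts) (auto simp: dforests_def internal_eq_0_iff)
  then show ?thesis
    by (auto simp: dforests_def)
qed

text \<open>Classification by the first tree: a leaf, or an internal root whose \<open>d\<close> subtrees take
  its place in the forest.\<close>
lemma dforests_Suc_Suc:
  assumes "1 \<le> d"
  shows "dforests d (Suc m) (Suc n) =
           Cons (Node []) ` dforests d m (Suc n)
           \<union> (\<lambda>us. Node (take d us) # drop d us) ` dforests d (m + d) n"
    (is "_ = ?L \<union> ?R")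
proof (intro equalityI subsetI)
  fix ts assume ts: "ts \<in> dforests d (Suc m) (Suc n)"
  then obtain t rest where "ts = t # rest"
    by (cases ts) (auto simp: dforests_def)
  moreover obtain cs where "t = Node cs"
    by (cases t)
  ultimately have ts_eq: "ts = Node cs # rest"
    by simp
  show "ts \<in> ?L \<union> ?R"
  proof (cases "cs = []")
    case True
    then show ?thesis using ts ts_eq by (auto simp: dforests_def)
  next
    case False
    with ts ts_eq have "length cs = d" "cs @ rest \<in> dforests d (m + d) n"
      by (auto simp: dforests_def)
    then show ?thesis
      using ts_eq by (auto intro!: image_eqI[where x = "cs @ rest"])
  qed
next
  fix ts assume "ts \<in> ?L \<union> ?R"
  then consider "ts \<in> ?L"
    | us where "us \<in> dforests d (m + d) n" "ts = Node (take d us) # drop d us"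
    by blast
  then show "ts \<in> dforests d (Suc m) (Suc n)"
  proof cases
    case 1
    then show ?thesis by (auto simp: dforests_def)
  next
    case 2
    moreover have "take d us \<noteq> []"
      using 2 assms by (auto simp: dforests_def)
    moreover have "sum_list (map internal (take d us)) + sum_list (map internal (drop d us))
                     = sum_list (map internal us)"
      by (metis append_take_drop_id map_append sum_list_append)
    ultimately show ?thesis
      by (auto simp: dforests_def dest: in_set_takeD in_set_dropD)
  qed
qed

text \<open>This is \<open>m / (d n + m) * (d n + m choose n)\<close> written without division; \<open>n = 0\<close> is a
  separate case because of truncated subtraction.\<close>
definition forest_count :: "nat \<Rightarrow> nat \<Rightarrow> nat \<Rightarrow> int" where
  "forest_count d m n =
     (if n = 0 then 1 else int ((d * n + m) choose n) - int d * int ((d * n + m - 1) choose (n - 1)))"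

lemma forest_count_0_Suc: "forest_count d 0 (Suc n) = 0"
proof -
  have "Suc n * ((d * Suc n) choose Suc n) = Suc n * (d * ((d * Suc n - 1) choose n))"
    by (subst binomial_absorption) (simp add: algebra_simps)
  then have "(d * Suc n) choose Suc n = d * ((d * Suc n - 1) choose n)"
    by (simp only: mult_left_cancel nat.distinct(1) simp_thms)
  then show ?thesis
    by (simp add: forest_count_def)
qed

lemma forest_count_Suc_Suc:
  assumes "1 \<le> d"
  shows "forest_count d (Suc m) (Suc n) = forest_count d m (Suc n) + forest_count d (m + d) n"
proof (cases n)
  case 0
  then show ?thesis by (simp add: forest_count_def)
next
  case (Suc p)
  define N where "N = d * Suc n + m"
  obtain N' where N': "N = Suc N'"
    using assms by (cases N) (auto simp: N_def)
  have "d * n + (m + d) = N" "d * Suc n + Suc m = Suc N"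
    by (simp_all add: N_def algebra_simps)
  moreover have "N choose n = (N' choose p) + (N' choose n)"
    using N' Suc by simp
  ultimately show ?thesis
    using N' Suc by (simp add: forest_count_def N_def algebra_simps)
qed

lemma card_dforests:
  assumes "1 \<le> d"
  shows "finite (dforests d m n) \<and> int (card (dforests d m n)) = forest_count d m n"
proof (induction n arbitrary: m)
  case 0
  show ?case
    by (induction m) (simp_all add: dforests_0 dforests_Suc_0 card_image forest_count_def)
next
  case (Suc n)
  note IH_n = Suc.IH
  show ?case
  proof (induction m)
    case 0
    then show ?case by (simp add: dforests_0 forest_count_0_Suc)
  next
    case (Suc m)
    let ?split = "\<lambda>us. Node (take d us) # drop d us"
    let ?A = "Cons (Node []) ` dforests d m (Suc n)"
    let ?B = "?split ` dforests d (m + d) n"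
    have "inj_on ?split (dforests d (m + d) n)"
    proof (rule inj_onI)
      fix us vs assume "?split us = ?split vs"
      then have "take d us = take d vs" "drop d us = drop d vs"
        by simp_all
      then show "us = vs"
        by (metis append_take_drop_id)
    qed
    then have B: "finite ?B" "int (card ?B) = forest_count d (m + d) n"
      using IH_n[of "m + d"] by (simp_all add: card_image)
    have A: "finite ?A" "int (card ?A) = forest_count d m (Suc n)"
      using Suc.IH by (simp_all add: card_image)
    have "take d us \<noteq> []" if "us \<in> dforests d (m + d) n" for us
      using that assms by (auto simp: dforests_def)
    then have "?A \<inter> ?B = {}"
      by fastforce
    then have "card (?A \<union> ?B) = card ?A + card ?B"
      using A B by (simp add: card_Un_disjoint)
    then show ?case
      using A B forest_count_Suc_Suc[OF assms]
      by (simp add: dforests_Suc_Suc[OF assms])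
  qed
qed

lemma catalan_trees_Suc: "1 \<le> d \<Longrightarrow> catalan_trees d (Suc n) = Node ` dforests d d n"
proof (intro equalityI subsetI)
  fix t assume "t \<in> catalan_trees d (Suc n)"
  moreover obtain ts where "t = Node ts"
    by (cases t)
  ultimately show "t \<in> Node ` dforests d d n"
    by (auto simp: catalan_trees_def dforests_def split: if_splits)
next
  fix t assume "1 \<le> d" "t \<in> Node ` dforests d d n"
  then show "t \<in> catalan_trees d (Suc n)"
    by (auto simp: catalan_trees_def dforests_def)
qed

lemma card_catalan_trees:
  assumes "1 \<le> d" "1 \<le> k"
  shows "k * card (catalan_trees d k) = (d * k) choose (k - 1)"
proof -
  obtain n where k: "k = Suc n"
    using assms(2) by (cases k) auto
  have "int (card (catalan_trees d k)) = forest_count d d n"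
    using card_dforests[OF assms(1)]
    by (simp add: k catalan_trees_Suc[OF assms(1)] card_image inj_on_def)
  moreover have "int (Suc n) * forest_count d d n = int ((d * Suc n) choose n)"
  proof (cases n)
    case 0
    then show ?thesis by (simp add: forest_count_def)
  next
    case (Suc p)
    have "n * ((d * Suc n) choose n) = Suc n * (d * ((d * Suc n - 1) choose p))"
      using times_binomial_minus1_eq[of n "d * Suc n"] Suc by (simp add: algebra_simps)
    then have "int n * int ((d * Suc n) choose n)
                 = int (Suc n) * (int d * int ((d * Suc n - 1) choose p))"
      by (metis of_nat_mult)
    then show ?thesis
      using Suc by (simp add: forest_count_def algebra_simps)
  qed
  ultimately have "int (k * card (catalan_trees d k)) = int ((d * k) choose (k - 1))"
    by (simp add: k algebra_simps)
  then show ?thesis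
    by (simp only: of_nat_eq_iff)
qed

lemma card_catalan_trees_pos:
  assumes "1 \<le> d" "1 \<le> k"
  shows "0 < card (catalan_trees d k)"
proof -
  have "k \<le> d * k"
    using assms(1) by simp
  then have "k - 1 \<le> d * k"
    by linarith
  then have "0 < k * card (catalan_trees d k)"
    by (simp add: card_catalan_trees[OF assms])
  then show ?thesis
    by simp
qed

lemma catalan_trees_1_children:
  assumes "t \<in> catalan_trees d 1"
  shows "length (children t) = d" "s \<in> set (children t) \<Longrightarrow> is_leaf s"
  using assms by (cases t; auto simp: catalan_trees_def is_leaf_def internal_eq_0_iff split: if_splits)+

lemma binomial_Suc_le:
  assumes "2 \<le> d" "d * r \<le> Suc N"
  shows "real (d - 1) * real (Suc N choose r) \<le> real d * real (N choose r)"
proof -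
  have "2 * r \<le> d * r"
    using assms(1) by simp
  then have r: "r < Suc N"
    using assms(2) by linarith
  have "real d * real r \<le> real (Suc N)"
    using assms(2) by (metis of_nat_le_iff of_nat_mult)
  then have factor_le: "real (d - 1) * real (Suc N) \<le> real d * real (Suc N - r)"
    using assms(1) r by (simp add: right_diff_distrib left_diff_distrib)
  have absorb: "real (Suc N - r) * real (Suc N choose r) = real (Suc N) * real (N choose r)"
    by (metis binomial_absorb_comp diff_Suc_1 of_nat_mult)
  have "real (d - 1) * real (Suc N choose r) * real (Suc N - r)
          = real (d - 1) * (real (Suc N - r) * real (Suc N choose r))"
    by (simp only: mult_ac)
  also have "\<dots> = real (d - 1) * real (Suc N) * real (N choose r)"
    using absorb by (simp only: mult.assoc)
  also have "\<dots> \<le> real d * real (Suc N - r) * real (N choose r)"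
    using factor_le by (rule mult_right_mono) simp
  also have "\<dots> = real d * real (N choose r) * real (Suc N - r)"
    by (simp only: mult_ac)
  finally show ?thesis
    using r by simp
qed

lemma binomial_add_le:
  assumes "2 \<le> d" "d * r \<le> Suc N"
  shows "real (d - 1) ^ j * real ((N + j) choose r) \<le> real d ^ j * real (N choose r)"
proof (induction j)
  case 0
  then show ?case by simp
next
  case (Suc j)
  have "real (d - 1) ^ Suc j * real ((N + Suc j) choose r)
          = real (d - 1) ^ j * (real (d - 1) * real (Suc (N + j) choose r))"
    by simp
  also have "\<dots> \<le> real (d - 1) ^ j * (real d * real ((N + j) choose r))"
    using binomial_Suc_le[OF assms(1), of r "N + j"] assms(2)
    by (intro mult_left_mono) auto
  also have "\<dots> = real d * (real (d - 1) ^ j * real ((N + j) choose r))"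
    by simp
  also have "\<dots> \<le> real d * (real d ^ j * real (N choose r))"
    using Suc.IH by (intro mult_left_mono) auto
  finally show ?case
    by simp
qed

lemma choose_eq_card_catalan_trees:
  assumes "1 \<le> d" "1 \<le> k"
  shows "(d * k) choose k = ((d - 1) * k + 1) * card (catalan_trees d k)"
proof -
  obtain n where k: "k = Suc n"
    using assms(2) by (cases k) auto
  have "k * ((d * k) choose k) = (d * k - n) * ((d * k) choose n)"
    using binomial_absorption[of n "d * k"] binomial_absorb_comp[of "d * k" n] k by simp
  also have "\<dots> = k * ((d * k - n) * card (catalan_trees d k))"
    using card_catalan_trees[OF assms] k by (metis diff_Suc_1 mult.left_commute)
  finally have "(d * k) choose k = (d * k - n) * card (catalan_trees d k)"
    using assms(2) by (metis mult_left_cancel not_one_le_zero)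
  moreover have "d * k - n = (d - 1) * k + 1"
  proof -
    obtain e where "d = Suc e"
      using assms(1) by (cases d) auto
    then show ?thesis
      using k by (simp add: algebra_simps)
  qed
  ultimately show ?thesis
    by simp
qed

lemma card_catalan_trees_Suc_le:
  assumes "2 \<le> d" "1 \<le> k"
  shows "real (card (catalan_trees d (Suc k))) \<le> exp 1 * real d * real (card (catalan_trees d k))"
proof -
  obtain e where d: "d = Suc e" and e: "0 < e"
    using assms(1) by (cases d) auto
  define c0 where "c0 = real (card (catalan_trees d k))"
  define c1 where "c1 = real (card (catalan_trees d (Suc k)))"
  have c0_nonneg: "0 \<le> c0"
    by (simp add: c0_def)
  have "Suc k * card (catalan_trees d (Suc k)) = (d * k + d) choose k"
    using card_catalan_trees[of d "Suc k"] d by (simp add: algebra_simps)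
  then have c1: "real (Suc k) * c1 = real ((d * k + d) choose k)"
    unfolding c1_def by (metis of_nat_mult)
  have c0: "real ((d * k) choose k) = (real e * real k + 1) * c0"
  proof -
    have "(d * k) choose k = (e * k + 1) * card (catalan_trees d k)"
      using choose_eq_card_catalan_trees[of d k] assms d by simp
    then show ?thesis
      unfolding c0_def by (metis of_nat_1 of_nat_add of_nat_mult)
  qed
  have "real e * real e ^ e * (real (Suc k) * c1) \<le> real d ^ d * ((real e * real k + 1) * c0)"
    using binomial_add_le[OF assms(1), of k "d * k" d] c1 c0 d by simp
  also have "\<dots> \<le> real d ^ d * (real e * real (Suc k) * c0)"
    using e c0_nonneg by (intro mult_left_mono mult_right_mono) (auto simp: algebra_simps)
  finally have "(real e * real (Suc k)) * (real e ^ e * c1)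
                  \<le> (real e * real (Suc k)) * (real d ^ d * c0)"
    by (simp only: mult_ac)
  then have "real e ^ e * c1 \<le> real d ^ d * c0"
    using e by simp
  also have "real d ^ d = real e ^ e * (real d * (1 + 1 / real e) ^ e)"
  proof -
    have "real d = real e * (1 + 1 / real e)"
      using d e by (simp add: field_simps)
    then have "real d ^ e = real e ^ e * (1 + 1 / real e) ^ e"
      by (metis power_mult_distrib)
    then show ?thesis
      using d by simp
  qed
  finally have "c1 \<le> real d * (1 + 1 / real e) ^ e * c0"
    using e by (simp add: mult.assoc)
  also have "\<dots> \<le> real d * exp 1 * c0"
    using exp_ge_one_plus_x_over_n_power_n[where n = e and x = 1] e c0_nonneg
    by (intro mult_left_mono mult_right_mono) auto
  finally show ?thesis
    by (simp add: c0_def c1_def ac_simps)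
qed

lemma replicate_append_Cons_inject:
  assumes "replicate i x @ y # ys = replicate j x @ z # zs" "y \<noteq> x" "z \<noteq> x"
  shows "i = j \<and> y = z \<and> ys = zs"
  using assms
proof (induction i arbitrary: j)
  case 0
  then show ?case by (cases j) auto
next
  case (Suc i)
  then show ?case by (cases j) auto
qed

definition single_branch :: "nat \<Rightarrow> nat \<Rightarrow> ptree \<Rightarrow> ptree" where
  "single_branch d i t = Node (replicate i (Node []) @ t # replicate (d - 1 - i) (Node []))"

lemma single_branch_in_catalan_trees:
  assumes "i < d" "t \<in> catalan_trees d k"
  shows "single_branch d i t \<in> catalan_trees d (Suc k)"
proof -
  let ?cs = "replicate i (Node []) @ t # replicate (d - 1 - i) (Node [])"
  have "length ?cs = d"
    using assms(1) by simp
  moreover have "\<forall>s\<in>set ?cs. dcatalan d s"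
    using assms(2) by (auto simp: catalan_trees_def set_replicate_conv_if)
  moreover have "sum_list (map internal ?cs) = k"
    using assms(2) by (simp add: catalan_trees_def)
  ultimately show ?thesis
    by (simp add: single_branch_def catalan_trees_def)
qed

lemma length_filter_is_leaf_single_branch:
  "i < d \<Longrightarrow> d - 1 \<le> length (filter is_leaf (children (single_branch d i t)))"
  by (simp add: single_branch_def is_leaf_def)

lemma inj_on_single_branch:
  "inj_on (\<lambda>(i, t). single_branch d i t) (UNIV \<times> {t. \<not> is_leaf t})"
proof (rule inj_onI, clarify)
  fix i j t u
  assume eq: "single_branch d i t = single_branch d j u"
    and "\<not> is_leaf t" "\<not> is_leaf u"
  then have "t \<noteq> Node []" "u \<noteq> Node []"
    by (auto simp: is_leaf_def)
  moreover have "replicate i (Node []) @ t # replicate (d - 1 - i) (Node [])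
                   = replicate j (Node []) @ u # replicate (d - 1 - j) (Node [])"
    using eq by (simp add: single_branch_def)
  ultimately show "i = j \<and> t = u"
    using replicate_append_Cons_inject by metis
qed

lemma card_catalan_trees_le_card_leaf_children:
  assumes "1 \<le> d" "1 \<le> k"
  shows "d * card (catalan_trees d k)
           \<le> card {t \<in> catalan_trees d (Suc k). d - 1 \<le> length (filter is_leaf (children t))}"
    (is "_ \<le> card ?G")
proof -
  let ?branch = "\<lambda>(i, t). single_branch d i t"
  have "0 < card (catalan_trees d (Suc k))"
    by (rule card_catalan_trees_pos[OF assms(1)]) simp
  then have fin: "finite ?G"
    by (simp add: card_ge_0_finite)
  have "\<not> is_leaf t" if "t \<in> catalan_trees d k" for t
    using that assms(2) by (cases t) (auto simp: catalan_trees_def is_leaf_def)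
  then have "{..<d} \<times> catalan_trees d k \<subseteq> UNIV \<times> {t. \<not> is_leaf t}"
    by blast
  then have inj: "inj_on ?branch ({..<d} \<times> catalan_trees d k)"
    by (rule inj_on_subset[OF inj_on_single_branch])
  have "?branch ` ({..<d} \<times> catalan_trees d k) \<subseteq> ?G"
    using single_branch_in_catalan_trees length_filter_is_leaf_single_branch by auto
  then have "card ({..<d} \<times> catalan_trees d k) \<le> card ?G"
    using card_inj_on_le[OF inj _ fin] by blast
  then show ?thesis
    by (simp add: card_cartesian_product)
qed

theorem lemma5p2:
  fixes d k :: nat
  assumes "d \<ge> 2" and "k \<ge> 1"
  shows "real (card {t \<in> catalan_trees d k.
                 length (filter is_leaf (children t)) \<ge> d - 1})
           / real (card (catalan_trees d k)) \<ge> exp (-1)"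
proof -
  let ?G = "{t \<in> catalan_trees d k. length (filter is_leaf (children t)) \<ge> d - 1}"
  have d: "1 \<le> d"
    using assms(1) by simp
  have pos: "0 < real (card (catalan_trees d k))"
    using card_catalan_trees_pos[OF d assms(2)] by simp
  show ?thesis
  proof (cases "k = 1")
    case True
    then have "?G = catalan_trees d k"
      using catalan_trees_1_children by (auto simp: filter_id_conv)
    then show ?thesis
      using pos by simp
  next
    case False
    then obtain m where k: "k = Suc m" and m: "1 \<le> m"
      using assms(2) by (cases k) auto
    have "real (card (catalan_trees d k)) \<le> exp 1 * (real d * real (card (catalan_trees d m)))"
      using card_catalan_trees_Suc_le[OF assms(1) m] k by (simp add: mult.assoc)
    also have "\<dots> \<le> exp 1 * real (card ?G)"
      using card_catalan_trees_le_card_leaf_children[OF d m] k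
      by (simp flip: of_nat_mult)
    finally show ?thesis
      using pos by (simp add: exp_minus field_simps)
  qed
qed

end
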